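(* Let $K$ be an algebraically closed field and $m>1$. If $a,b$ are endomorphisms of $K^m$ whose commutator $c=ab-ba$ has rank at most one, then $a$ and $b$ have a common invariant subspace $U$ with $0\ne U\ne K^m$. *)

theory Defs
  imports "HOL-Analysis.Analysis" "HOL-Computational_Algebra.Polynomial"
begin

end

theory Submission
  imports Defs "Jordan_Normal_Form.Char_Poly"
begin

text \<open>
  Pick an eigenvalue \<open>\<lambda>\<close> of \<open>a\<close> and put \<open>M = a - \<lambda>I\<close>, so that \<open>a\<close> commutes with \<open>M\<close>
  and \<open>c = ab - ba = Mb - bM\<close>. If \<open>a\<close> is scalar, any eigenline of \<open>b\<close> will do. If \<open>c\<close>
  vanishes on \<open>ker M\<close>, then \<open>b\<close> preserves \<open>ker M\<close>. Otherwise \<open>c x\<^sub>0 = M (b x\<^sub>0) \<noteq> 0\<close> for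
  some \<open>x\<^sub>0 \<in> ker M\<close>; as \<open>c\<close> has rank one, its image is the line through \<open>c x\<^sub>0\<close>, hence
  lies in \<open>im M\<close>, and \<open>b M = M b - c\<close> shows that \<open>b\<close> preserves \<open>im M\<close>.
\<close>

definition nontrivial_common_invariant ::
    "'a::field ^ 'n ^ 'n \<Rightarrow> 'a ^ 'n ^ 'n \<Rightarrow> ('a ^ 'n) set \<Rightarrow> bool" where
  "nontrivial_common_invariant a b U \<longleftrightarrow>
     vec.subspace U \<and> U \<noteq> {0} \<and> U \<noteq> UNIV \<and> (\<forall>x\<in>U. a *v x \<in> U \<and> b *v x \<in> U)"

lemma mat_has_eigenvector:
  fixes A :: "'a::alg_closed_field mat"
  assumes "A \<in> carrier_mat n n" and "n > 0"
  shows "\<exists>k v. v \<in> carrier_vec n \<and> v \<noteq> 0\<^sub>v n \<and> A *\<^sub>v v = k \<cdot>\<^sub>v v"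
proof -
  have "degree (char_poly A) > 0"
    using degree_monic_char_poly[OF assms(1)] assms(2) by simp
  then obtain k where "poly (char_poly A) k = 0"
    using alg_closed_imp_poly_has_root by blast
  then have "eigenvalue A k"
    using eigenvalue_root_char_poly[OF assms(1)] by simp
  then show ?thesis
    unfolding eigenvalue_def eigenvector_def using assms(1) by auto
qed

lemma matrix_has_eigenvector:
  fixes a :: "'a::alg_closed_field ^ 'n ^ 'n"
  shows "\<exists>k w. w \<noteq> 0 \<and> a *v w = k *s w"
proof -
  let ?n = "CARD('n)"
  obtain h where h: "bij_betw h {0..<?n} (UNIV :: 'n set)"
    using ex_bij_betw_nat_finite[of "UNIV :: 'n set"] by auto
  define g where "g = inv_into {0..<?n} h"
  have h_g: "h (g x) = x" for x
    using h unfolding g_def by (meson UNIV_I bij_betw_inv_into_right)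
  have g_h: "i < ?n \<Longrightarrow> g (h i) = i" for i
    using bij_betw_inv_into_left[OF h] g_def by auto
  have g_less: "g x < ?n" for x
    using h unfolding g_def by (metis UNIV_I atLeastLessThan_iff bij_betw_def inv_into_into)
  define A where "A = Matrix.mat ?n ?n (\<lambda>(i, j). a $ h i $ h j)"
  obtain k v where v: "v \<in> carrier_vec ?n" "v \<noteq> 0\<^sub>v ?n" "A *\<^sub>v v = k \<cdot>\<^sub>v v"
    using mat_has_eigenvector[of A ?n] unfolding A_def by auto
  define w where "w = (\<chi> x. vec_index v (g x))"
  have w_h: "i < ?n \<Longrightarrow> w $ h i = vec_index v i" for i
    by (simp add: w_def g_h)
  have "w \<noteq> 0"
  proof
    assume "w = 0"
    then have "v = 0\<^sub>v ?n"
      using v(1) w_h by (intro eq_vecI) auto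
    with v(2) show False by simp
  qed
  moreover have "(a *v w) $ x = (k *s w) $ x" for x
  proof -
    have "(a *v w) $ x = (\<Sum>j\<in>UNIV. a $ x $ j * w $ j)"
      by (simp add: matrix_vector_mult_def)
    also have "\<dots> = (\<Sum>i\<in>{0..<?n}. a $ x $ h i * w $ h i)"
      by (rule sum.reindex_bij_betw[OF h, symmetric])
    also have "\<dots> = vec_index (A *\<^sub>v v) (g x)"
      using v(1) g_less[of x] by (simp add: A_def scalar_prod_def h_g w_h mult.commute)
    also have "\<dots> = (k *s w) $ x"
      using v(1,3) g_less[of x] by (simp add: w_def)
    finally show ?thesis .
  qed
  ultimately show ?thesis
    by (metis Finite_Cartesian_Product.vec_eq_iff)
qed

lemma rank_le_one_rows_in_span:
  fixes c :: "'a::field ^ 'n ^ 'm"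
  assumes "rank c \<le> 1"
  obtains r where "Finite_Cartesian_Product.rows c \<subseteq> vec.span {r}"
proof -
  obtain B where B: "B \<subseteq> Finite_Cartesian_Product.rows c" "vec.independent B"
      "Finite_Cartesian_Product.rows c \<subseteq> vec.span B"
      "card B = vec.dim (Finite_Cartesian_Product.rows c)"
    by (rule vec.basis_exists)
  have "finite B" "card B \<le> 1"
    using B(2,4) assms vec.finiteI_independent unfolding row_rank_def_gen by auto
  then consider "B = {}" | r where "B = {r}"
    by (metis card_0_eq card_1_singletonE le_eq_less_or_eq less_one)
  then show thesis
  proof cases
    case 1
    then show thesis
      using B(3) that[of 0] vec.span_mono[of "{}" "{0}"] by auto
  next
    case 2
    then show thesis
      using B(3) that by auto
  qed
qed

lemma rank_le_one_matrix_vector_mult: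
  fixes c :: "'a::field ^ 'n ^ 'm"
  assumes "rank c \<le> 1"
  obtains f t where "\<And>x. c *v x = f x *s t"
proof -
  obtain r where r: "Finite_Cartesian_Product.rows c \<subseteq> vec.span {r}"
    using rank_le_one_rows_in_span[OF assms] .
  have "\<exists>s. Finite_Cartesian_Product.row i c = s *s r" for i
  proof -
    have "Finite_Cartesian_Product.row i c \<in> Finite_Cartesian_Product.rows c"
      by (auto simp: Finite_Cartesian_Product.rows_def)
    then show ?thesis
      using r vec.span_singleton by blast
  qed
  then obtain s where s: "\<And>i. Finite_Cartesian_Product.row i c = s i *s r"
    by metis
  have "c $ i $ j = s i * r $ j" for i j
    using arg_cong[OF s[of i], of "\<lambda>v. v $ j"] by (simp add: Finite_Cartesian_Product.row_def)
  then have "c *v x = (\<Sum>j\<in>UNIV. r $ j * x $ j) *s (\<chi> i. s i)" for x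
    by (simp add: Finite_Cartesian_Product.vec_eq_iff matrix_vector_mult_def sum_distrib_left mult_ac)
  then show thesis
    by (rule that)
qed

lemma rank_le_one_range_in_span:
  fixes c :: "'a::field ^ 'n ^ 'm"
  assumes "rank c \<le> 1" and "c *v x\<^sub>0 \<noteq> 0"
  shows "c *v x \<in> vec.span {c *v x\<^sub>0}"
proof -
  obtain f t where c: "\<And>x. c *v x = f x *s t"
    using rank_le_one_matrix_vector_mult[OF assms(1)] by metis
  have "f x\<^sub>0 \<noteq> 0"
    using assms(2) by (simp add: c)
  then have "c *v x = (f x / f x\<^sub>0) *s (c *v x\<^sub>0)"
    by (simp add: c)
  then show ?thesis
    by (metis vec.span_base vec.span_scale singletonI)
qed

lemma mat_matrix_vector_mult: "Finite_Cartesian_Product.mat k *v x = k *s x"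
proof -
  have "(if P then k else 0) * y = (if P then k * y else 0)" for P and y :: 'a
    by simp
  then show ?thesis
    by (simp add: Finite_Cartesian_Product.vec_eq_iff matrix_vector_mult_def
        Finite_Cartesian_Product.mat_def sum.delta)
qed

lemma commutator_matrix_vector_mult:
  fixes a b :: "'a::comm_ring_1 ^ 'n ^ 'n"
  shows "(a ** b - b ** a) *v x = a *v (b *v x) - b *v (a *v x)"
  by (simp add: matrix_vector_mult_diff_rdistrib matrix_vector_mul_assoc)

lemma eigenline_common_invariant:
  fixes a b :: "'a::field ^ 'n ^ 'n"
  assumes "CARD('n) > 1" and "\<And>x. a *v x = l *s x"
    and "u \<noteq> 0" and "b *v u = m *s u"
  shows "nontrivial_common_invariant a b (vec.span {u})"
proof -
  have "vec.span {u} \<noteq> UNIV"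
  proof
    assume "vec.span {u} = UNIV"
    then have "vec.dim (UNIV :: ('a ^ 'n) set) \<le> card {u}"
      by (metis vec.dim_le_card finite.emptyI finite.insertI order_refl)
    with assms(1) show False
      by (simp add: vec_dim_card card_cart_basis)
  qed
  moreover have "vec.span {u} \<noteq> {0}"
    using assms(3) vec.span_base[of u "{u}"] by auto
  moreover have "a *v x \<in> vec.span {u} \<and> b *v x \<in> vec.span {u}" if x: "x \<in> vec.span {u}" for x
  proof -
    obtain t where "x = t *s u"
      using x by (auto simp: vec.span_singleton)
    then have "a *v x = (l * t) *s u" "b *v x = (m * t) *s u"
      by (simp_all add: assms(2,4) vector_scalar_commute)
    then show ?thesis
      by (auto simp: vec.span_singleton intro: range_eqI)
  qed
  ultimately show ?thesis
    unfolding nontrivial_common_invariant_def by blast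
qed

lemma eigenspace_common_invariant:
  fixes a b :: "'a::field ^ 'n ^ 'n"
  assumes "w \<noteq> 0" and "a *v w = l *s w" and "a *v v \<noteq> l *s v"
    and "\<And>x. a *v x = l *s x \<Longrightarrow> (a ** b - b ** a) *v x = 0"
  shows "nontrivial_common_invariant a b {x. a *v x = l *s x}"
proof -
  have "vec.subspace {x. a *v x = l *s x}"
    using vec.subspace_kernel[of "a - Finite_Cartesian_Product.mat l"]
    by (simp add: matrix_vector_mult_diff_rdistrib mat_matrix_vector_mult)
  moreover have "b *v x \<in> {x. a *v x = l *s x}" if "a *v x = l *s x" for x
  proof -
    have "a *v (b *v x) = b *v (a *v x)"
      using assms(4)[OF that] by (simp add: commutator_matrix_vector_mult)
    then show ?thesis
      by (simp add: that vector_scalar_commute)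
  qed
  ultimately show ?thesis
    using assms(1-3) unfolding nontrivial_common_invariant_def
    by (auto simp: vector_scalar_commute)
qed

lemma image_common_invariant:
  fixes a b :: "'a::field ^ 'n ^ 'n" and l :: 'a
  defines "M \<equiv> a - Finite_Cartesian_Product.mat l"
  assumes "w \<noteq> 0" and "a *v w = l *s w" and "a *v v \<noteq> l *s v"
    and "\<And>x. (a ** b - b ** a) *v x \<in> range ((*v) M)"
  shows "nontrivial_common_invariant a b (range ((*v) M))"
proof -
  have M: "M *v x = a *v x - l *s x" for x
    by (simp add: M_def matrix_vector_mult_diff_rdistrib mat_matrix_vector_mult)
  have "range ((*v) M) \<noteq> UNIV"
  proof
    assume "range ((*v) M) = UNIV"
    then have "inj ((*v) M)"
      using vec.linear_surj_imp_inj[OF matrix_vector_mul_linear_gen] by blast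
    moreover have "M *v w = M *v 0"
      using assms(3) by (simp add: M)
    ultimately show False
      using assms(2) by (meson injD)
  qed
  moreover have "range ((*v) M) \<noteq> {0}"
  proof -
    have "M *v v \<noteq> 0"
      using assms(4) by (simp add: M)
    then show ?thesis
      by blast
  qed
  moreover have "a *v y \<in> range ((*v) M) \<and> b *v y \<in> range ((*v) M)"
    if "y \<in> range ((*v) M)" for y
  proof -
    from that obtain x where y: "y = M *v x"
      by blast
    obtain z where z: "(a ** b - b ** a) *v x = M *v z"
      using assms(5)[of x] by blast
    have "a *v y = M *v (a *v x)"
      by (simp add: y M matrix_vector_mult_diff_distrib vector_scalar_commute)
    moreover have "b *v y = M *v (b *v x) - (a ** b - b ** a) *v x"
      by (simp add: y M commutator_matrix_vector_mult matrix_vector_mult_diff_distrib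
          vector_scalar_commute)
    then have "b *v y = M *v (b *v x - z)"
      by (simp add: z matrix_vector_mult_diff_distrib)
    ultimately show ?thesis
      by blast
  qed
  ultimately show ?thesis
    unfolding nontrivial_common_invariant_def
    using vec.subspace_image[OF vec.subspace_UNIV] by auto
qed

lemma commutator_range_in_image:
  fixes a b :: "'a::field ^ 'n ^ 'n"
  assumes "rank (a ** b - b ** a) \<le> 1"
    and "a *v x\<^sub>0 = l *s x\<^sub>0" and "(a ** b - b ** a) *v x\<^sub>0 \<noteq> 0"
  shows "(a ** b - b ** a) *v x \<in> range ((*v) (a - Finite_Cartesian_Product.mat l))"
proof -
  have "(a ** b - b ** a) *v x\<^sub>0 = (a - Finite_Cartesian_Product.mat l) *v (b *v x\<^sub>0)"
    unfolding commutator_matrix_vector_mult using assms(2)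
    by (simp add: matrix_vector_mult_diff_rdistrib mat_matrix_vector_mult vector_scalar_commute)
  then have "vec.span {(a ** b - b ** a) *v x\<^sub>0} \<subseteq> range ((*v) (a - Finite_Cartesian_Product.mat l))"
    by (intro vec.span_minimal) (auto intro: vec.subspace_image[OF vec.subspace_UNIV])
  then show ?thesis
    using rank_le_one_range_in_span[OF assms(1,3)] by blast
qed

theorem lemma2p1:
  fixes a b :: "'a::alg_closed_field ^ 'n ^ 'n"
  assumes "CARD('n) > 1"
    and "rank (a ** b - b ** a) \<le> 1"
  shows "\<exists>U. vec.subspace U \<and> U \<noteq> {0} \<and> U \<noteq> UNIV \<and>
             (\<forall>x\<in>U. a *v x \<in> U \<and> b *v x \<in> U)"
proof -
  obtain l w where w: "w \<noteq> 0" "a *v w = l *s w"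
    using matrix_has_eigenvector by blast
  obtain m u where u: "u \<noteq> 0" "b *v u = m *s u"
    using matrix_has_eigenvector by blast
  have "\<exists>U. nontrivial_common_invariant a b U"
  proof (cases "\<forall>x. a *v x = l *s x")
    case True
    then show ?thesis
      using eigenline_common_invariant[OF assms(1) _ u] by blast
  next
    case False
    then obtain v where v: "a *v v \<noteq> l *s v"
      by blast
    show ?thesis
    proof (cases "\<forall>x. a *v x = l *s x \<longrightarrow> (a ** b - b ** a) *v x = 0")
      case True
      then show ?thesis
        using eigenspace_common_invariant[OF w v] by blast
    next
      case False
      then show ?thesis
        using image_common_invariant[OF w v] commutator_range_in_image[OF assms(2)] by blast
    qed
  qed
  then show ?thesis
    unfolding nontrivial_common_invariant_def .
qed

end
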